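(* Let $p_{XYZ}$ be the distribution in which $X$ and $Y$ are independent uniformly distributed bits and $Z=X\wedge Y$. There exists a correlated multi-secret sharing scheme for $p_{XYZ}$ with $H(M_{12})=H(M_{23})=H(M_{31})=\log 3$.
   Context: A correlated multi-secret sharing (CMSS) scheme for a joint distribution $p_{XYZ}$ on finite sets is a conditional distribution $p_{M_{12}M_{23}M_{31}|XYZ}$ mapping secrets $(X,Y,Z)\sim p_{XYZ}$ probabilistically to shares $(M_{12},M_{23},M_{31})$ such that (correctness) $H(X|M_{12},M_{31})=H(Y|M_{12},M_{23})=H(Z|M_{23},M_{31})=0$ and (privacy) $I((M_{12},M_{31});(Y,Z)|X)=0$, $I((M_{12},M_{23});(X,Z)|Y)=0$, $I((M_{23},M_{31});(X,Y)|Z)=0$. Logs base 2. *)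

theory Defs
  imports "HOL-Probability.Probability_Mass_Function"
begin

definition entropy :: "'a pmf \<Rightarrow> real" where
  "entropy p = - (\<Sum>x\<in>set_pmf p. pmf p x * log 2 (pmf p x))"

definition H :: "'w pmf \<Rightarrow> ('w \<Rightarrow> 'a) \<Rightarrow> real" where
  "H P f = entropy (map_pmf f P)"

definition condH :: "'w pmf \<Rightarrow> ('w \<Rightarrow> 'a) \<Rightarrow> ('w \<Rightarrow> 'b) \<Rightarrow> real" where
  "condH P f g = H P (\<lambda>w. (f w, g w)) - H P g"

definition condMI :: "'w pmf \<Rightarrow> ('w \<Rightarrow> 'a) \<Rightarrow> ('w \<Rightarrow> 'b) \<Rightarrow> ('w \<Rightarrow> 'c) \<Rightarrow> real" where
  "condMI P f g h = condH P f h - condH P f (\<lambda>w. (g w, h w))"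

definition cmss_joint ::
  "('x \<times> 'y \<times> 'z) pmf \<Rightarrow> ('x \<times> 'y \<times> 'z \<Rightarrow> ('m \<times> 'n \<times> 'k) pmf)
     \<Rightarrow> (('x \<times> 'y \<times> 'z) \<times> ('m \<times> 'n \<times> 'k)) pmf" where
  "cmss_joint p K = bind_pmf p (\<lambda>s. map_pmf (\<lambda>m. (s, m)) (K s))"

definition sX where "sX w = fst (fst w)"
definition sY where "sY w = fst (snd (fst w))"
definition sZ where "sZ w = snd (snd (fst w))"
definition M12 where "M12 w = fst (snd w)"
definition M23 where "M23 w = fst (snd (snd w))"
definition M31 where "M31 w = snd (snd (snd w))"

definition is_cmss ::
  "('x \<times> 'y \<times> 'z) pmf \<Rightarrow> ('x \<times> 'y \<times> 'z \<Rightarrow> ('m \<times> 'n \<times> 'k) pmf) \<Rightarrow> bool" where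
  "is_cmss p K \<longleftrightarrow>
     (\<forall>s\<in>set_pmf p. finite (set_pmf (K s))) \<and>
     (let P = cmss_joint p K in
       condH P sX (\<lambda>w. (M12 w, M31 w)) = 0 \<and>
       condH P sY (\<lambda>w. (M12 w, M23 w)) = 0 \<and>
       condH P sZ (\<lambda>w. (M23 w, M31 w)) = 0 \<and>
       condMI P (\<lambda>w. (M12 w, M31 w)) (\<lambda>w. (sY w, sZ w)) sX = 0 \<and>
       condMI P (\<lambda>w. (M12 w, M23 w)) (\<lambda>w. (sX w, sZ w)) sY = 0 \<and>
       condMI P (\<lambda>w. (M23 w, M31 w)) (\<lambda>w. (sX w, sY w)) sZ = 0)"

definition pAND :: "(bool \<times> bool \<times> bool) pmf" where
  "pAND = map_pmf (\<lambda>(x, y). (x, y, x \<and> y)) (pmf_of_set (UNIV :: (bool \<times> bool) set))"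

end

theory Submission
  imports Defs
begin

text \<open>Take \<open>(r\<^sub>1, r\<^sub>2)\<close> uniform on \<open>\<int>\<^sub>3 \<times> {1, 2}\<close> and the shares
  \<open>M\<^sub>12 = r\<^sub>1 + r\<^sub>2\<close>, \<open>M\<^sub>23 = r\<^sub>1 + c\<^sub>y r\<^sub>2\<close>, \<open>M\<^sub>31 = r\<^sub>1 + x r\<^sub>2\<close> in \<open>\<int>\<^sub>3\<close>,
  where \<open>c\<^sub>y = 1\<close> if \<open>y\<close> and \<open>c\<^sub>y = 2\<close> otherwise. Each share is uniform
  on \<open>\<int>\<^sub>3\<close>. A party's two shares have the form \<open>r\<^sub>1 + a r\<^sub>2, r\<^sub>1 + b r\<^sub>2\<close>,
  so the pair is uniform on the diagonal of \<open>\<int>\<^sub>3\<^sup>2\<close> if \<open>a = b\<close> and on its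
  complement otherwise; and \<open>a = b\<close> holds exactly when the party's secret
  is true (for \<open>M\<^sub>23, M\<^sub>31\<close>: \<open>c\<^sub>y = x\<close> iff \<open>x \<and> y\<close>). This gives correctness
  and privacy at once. All entropies are finite sums over 24 equally likely
  outcomes and are evaluated symbolically.\<close>

definition list_entropy :: "'a list \<Rightarrow> real" where
  "list_entropy vs =
     (\<Sum>v\<leftarrow>remdups vs. real (count_list vs v) / real (length vs) *
        (log 2 (real (length vs)) - log 2 (real (count_list vs v))))"

lemma entropy_map_pmf_of_set_list:
  assumes "distinct ws" "ws \<noteq> []"
  shows "entropy (map_pmf g (pmf_of_set (set ws))) = list_entropy (map g ws)"
proof -
  have fin: "finite (set ws)" and ne: "set ws \<noteq> {}"
    using assms by auto
  have pmf_eq: "pmf (map_pmf g (pmf_of_set (set ws))) v =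
      real (count_list (map g ws) v) / real (length ws)" for v
  proof -
    have "card (set ws \<inter> g -` {v}) = count_list (map g ws) v"
      using distinct_length_filter[OF assms(1), of "\<lambda>w. v = g w"]
      by (simp add: count_list_eq_length_filter filter_map o_def Int_commute vimage_def eq_commute)
    then show ?thesis
      using fin ne assms(1) by (simp add: pmf_map measure_pmf_of_set distinct_card)
  qed
  have count_pos: "v \<in> g ` set ws \<Longrightarrow> 0 < count_list (map g ws) v" for v
    using count_list_0_iff[of "map g ws" v] by auto
  have "entropy (map_pmf g (pmf_of_set (set ws))) =
      (\<Sum>v\<in>g ` set ws. real (count_list (map g ws) v) / real (length ws) *
         (log 2 (real (length ws)) - log 2 (real (count_list (map g ws) v))))"
    unfolding entropy_def pmf_eq set_map_pmf set_pmf_of_set[OF ne fin] sum_negf[symmetric]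
  proof (rule sum.cong)
    fix v assume "v \<in> g ` set ws"
    with count_pos[of v] assms(2) show "- (real (count_list (map g ws) v) / real (length ws) *
        log 2 (real (count_list (map g ws) v) / real (length ws))) =
      real (count_list (map g ws) v) / real (length ws) *
        (log 2 (real (length ws)) - log 2 (real (count_list (map g ws) v)))"
      by (simp add: log_divide algebra_simps)
  qed simp
  also have "\<dots> = list_entropy (map g ws)"
    unfolding list_entropy_def by (simp add: sum_list_distinct_conv_sum_set)
  finally show ?thesis .
qed

lemma pmf_of_set_Times:
  assumes "finite A" "A \<noteq> {}" "finite B" "B \<noteq> {}"
  shows "pmf_of_set (A \<times> B) = pair_pmf (pmf_of_set A) (pmf_of_set B)"
proof (rule pmf_eqI)
  fix i :: "'a \<times> 'b"
  show "pmf (pmf_of_set (A \<times> B)) i = pmf (pair_pmf (pmf_of_set A) (pmf_of_set B)) i"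
    using assms by (cases i) (simp add: pmf_pair card_cartesian_product indicator_def)
qed

definition and_randomness :: "(nat \<times> nat) set" where
  "and_randomness = {0, 1, 2} \<times> {1, 2}"

definition and_shares :: "bool \<times> bool \<times> bool \<Rightarrow> nat \<times> nat \<Rightarrow> nat \<times> nat \<times> nat" where
  "and_shares s r = (case s of (x, y, _) \<Rightarrow> case r of (r1, r2) \<Rightarrow>
     ((r1 + r2) mod 3,
      (r1 + (if y then 1 else 2) * r2) mod 3,
      (if x then (r1 + r2) mod 3 else r1 mod 3)))"

definition and_scheme :: "bool \<times> bool \<times> bool \<Rightarrow> (nat \<times> nat \<times> nat) pmf" where
  "and_scheme s = map_pmf (and_shares s) (pmf_of_set and_randomness)"

definition and_outcome ::
  "(bool \<times> bool) \<times> (nat \<times> nat) \<Rightarrow> (bool \<times> bool \<times> bool) \<times> (nat \<times> nat \<times> nat)" where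
  "and_outcome w = (case w of ((x, y), r) \<Rightarrow> ((x, y, x \<and> y), and_shares (x, y, x \<and> y) r))"

definition and_seeds :: "((bool \<times> bool) \<times> (nat \<times> nat)) list" where
  "and_seeds = List.product (List.product [False, True] [False, True]) (List.product [0, 1, 2] [1, 2])"

lemma set_and_seeds: "set and_seeds = UNIV \<times> and_randomness"
  by (simp only: and_seeds_def set_product and_randomness_def
      UNIV_Times_UNIV[symmetric] UNIV_bool) simp

lemma cmss_joint_and_scheme:
  "cmss_joint pAND and_scheme = map_pmf and_outcome (pmf_of_set (set and_seeds))"
proof -
  have "pmf_of_set (set and_seeds) = pair_pmf (pmf_of_set UNIV) (pmf_of_set and_randomness)"
    unfolding set_and_seeds by (rule pmf_of_set_Times) (auto simp: and_randomness_def)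
  then show ?thesis
    unfolding cmss_joint_def pAND_def and_scheme_def pair_pmf_def
    by (simp add: bind_map_pmf map_pmf_comp map_bind_pmf map_return_pmf
        map_pmf_def[symmetric] and_outcome_def split_beta)
qed

lemma H_and_scheme:
  "H (cmss_joint pAND and_scheme) f = list_entropy (map (f \<circ> and_outcome) and_seeds)"
proof -
  have "distinct and_seeds"
    unfolding and_seeds_def by (intro distinct_product) auto
  moreover have "and_seeds \<noteq> []"
    by (simp add: and_seeds_def)
  ultimately show ?thesis
    unfolding H_def cmss_joint_and_scheme map_pmf_comp
    using entropy_map_pmf_of_set_list[of and_seeds "f \<circ> and_outcome"] by (simp add: o_def)
qed

lemma log2_multiples_of_3:
  "log 2 (6::real) = 1 + log 2 3" "log 2 (12::real) = 2 + log 2 3"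
  "log 2 (24::real) = 3 + log 2 3" "log 2 (18::real) = 1 + 2 * log 2 3"
  using log_mult[of 2 "2::real" 3] log_mult[of 2 "4::real" 3] log_mult[of 2 "8::real" 3]
    log_mult[of 2 "2::real" 9] log_mult[of 2 "3::real" 3]
    log_pow_cancel[of "2::real" 2] log_pow_cancel[of "2::real" 3]
  by simp_all

lemma log2_powers_of_2: "log 2 (4::real) = 2" "log 2 (8::real) = 3"
  using log_pow_cancel[of "2::real" 2] log_pow_cancel[of "2::real" 3] by simp_all

lemmas and_scheme_evals = H_and_scheme and_seeds_def and_outcome_def and_shares_def
  list_entropy_def sX_def sY_def sZ_def M12_def M23_def M31_def
  log2_multiples_of_3 log2_powers_of_2

lemma and_scheme_share_entropies:
  "H (cmss_joint pAND and_scheme) M12 = log 2 3"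
  "H (cmss_joint pAND and_scheme) M23 = log 2 3"
  "H (cmss_joint pAND and_scheme) M31 = log 2 3"
  by (simp_all add: and_scheme_evals)

lemma and_scheme_correct:
  "condH (cmss_joint pAND and_scheme) sX (\<lambda>w. (M12 w, M31 w)) = 0"
  "condH (cmss_joint pAND and_scheme) sY (\<lambda>w. (M12 w, M23 w)) = 0"
  "condH (cmss_joint pAND and_scheme) sZ (\<lambda>w. (M23 w, M31 w)) = 0"
  unfolding condH_def by (simp_all add: and_scheme_evals)

lemma and_scheme_private:
  "condMI (cmss_joint pAND and_scheme) (\<lambda>w. (M12 w, M31 w)) (\<lambda>w. (sY w, sZ w)) sX = 0"
  "condMI (cmss_joint pAND and_scheme) (\<lambda>w. (M12 w, M23 w)) (\<lambda>w. (sX w, sZ w)) sY = 0"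
  "condMI (cmss_joint pAND and_scheme) (\<lambda>w. (M23 w, M31 w)) (\<lambda>w. (sX w, sY w)) sZ = 0"
  unfolding condMI_def condH_def by (simp_all add: and_scheme_evals field_simps)

lemma finite_set_pmf_and_scheme: "finite (set_pmf (and_scheme s))"
  by (simp add: and_scheme_def and_randomness_def)

theorem theorem12:
  shows "\<exists>K :: bool \<times> bool \<times> bool \<Rightarrow> (nat \<times> nat \<times> nat) pmf.
           is_cmss pAND K \<and>
           H (cmss_joint pAND K) M12 = log 2 3 \<and>
           H (cmss_joint pAND K) M23 = log 2 3 \<and>
           H (cmss_joint pAND K) M31 = log 2 3"
proof (intro exI conjI)
  show "is_cmss pAND and_scheme"
    unfolding is_cmss_def Let_def
    using finite_set_pmf_and_scheme and_scheme_correct and_scheme_private by blast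
qed (fact and_scheme_share_entropies)+

end
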